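(* Let $\Bbbk$ be a field of characteristic $\neq 2$ and let $A_1,\dots,A_m\in\Bbbk^{n\times n}$ be symmetric matrices. Then there do not exist $P\in\mathrm{GL}_n(\Bbbk)$, an integer $t\ge 2$ and positive integers $n_1,\dots,n_t$ with $\sum_j n_j=n$ such that every $P^TA_iP$ ($1\le i\le m$) is block diagonal with diagonal blocks of sizes $n_1,\dots,n_t$, if and only if the only matrices $X\in Z(A_1,\dots,A_m)$ with $X^2=X$ are $X=0$ and $X=I_n$.
   Context: The center of symmetric matrices $A_1,\dots,A_m\in\Bbbk^{n\times n}$ is $Z(A_1,\dots,A_m)=\{X\in\Bbbk^{n\times n} : (A_iX)^T=A_iX \text{ for all } 1\le i\le m\}$. *)

theory Defs
  imports "Jordan_Normal_Form.Matrix"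
begin

definition sym_mat :: "nat \<Rightarrow> 'a mat \<Rightarrow> bool" where
  "sym_mat n A \<longleftrightarrow> A \<in> carrier_mat n n \<and> transpose_mat A = A"

definition blk_start :: "nat list \<Rightarrow> nat \<Rightarrow> nat" where
  "blk_start ns b = sum_list (take b ns)"

definition block_diag_sizes :: "nat list \<Rightarrow> 'a::zero mat \<Rightarrow> bool" where
  "block_diag_sizes ns M \<longleftrightarrow>
     (\<forall>i < dim_row M. \<forall>j < dim_col M.
        (\<not> (\<exists>b < length ns. blk_start ns b \<le> i \<and> i < blk_start ns (Suc b)
                          \<and> blk_start ns b \<le> j \<and> j < blk_start ns (Suc b)))
        \<longrightarrow> M $$ (i, j) = 0)"

definition center :: "nat \<Rightarrow> nat \<Rightarrow> (nat \<Rightarrow> 'a::comm_ring_1 mat) \<Rightarrow> 'a mat set" where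
  "center n m A = {X \<in> carrier_mat n n. \<forall>i \<in> {1..m}. transpose_mat (A i * X) = A i * X}"

end

theory Submission
  imports Defs "Jordan_Normal_Form.DL_Rank"
begin

text \<open>
  Congruence transports the center: if \<open>D\<^sub>i = P\<^sup>T A\<^sub>i P\<close>, then \<open>A\<^sub>i X\<close> is symmetric iff
  \<open>D\<^sub>i (P\<^sup>-\<^sup>1 X P)\<close> is. If all \<open>D\<^sub>i\<close> are block diagonal, they commute with the diagonal
  projection \<open>E\<close> onto the first block, so \<open>D\<^sub>i E\<close> is symmetric and \<open>P E P\<^sup>-\<^sup>1\<close> is a
  nontrivial idempotent of the center. Conversely, a nontrivial idempotent \<open>X\<close> has a basis
  of eigenvectors, so \<open>X P = P E\<close> for some invertible \<open>P\<close> and a diagonal projection \<open>E\<close>;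
  then \<open>D\<^sub>i E\<close> is symmetric, and since \<open>D\<^sub>i\<close> and \<open>E\<close> are symmetric this says
  \<open>D\<^sub>i E = E D\<^sub>i\<close>, i.e. \<open>D\<^sub>i\<close> is block diagonal with two blocks.
\<close>

definition proj_mat :: "nat \<Rightarrow> nat \<Rightarrow> 'a::zero_neq_one mat" where
  "proj_mat n r = mat_diag n (\<lambda>i. if i < r then 1 else 0)"

lemma proj_mat_carrier [simp]: "proj_mat n r \<in> carrier_mat n n"
  by (simp add: proj_mat_def)

lemma dim_proj_mat [simp]: "dim_row (proj_mat n r) = n" "dim_col (proj_mat n r) = n"
  by (simp_all add: proj_mat_def mat_diag_def)

lemma index_proj_mat [simp]:
  "i < n \<Longrightarrow> j < n \<Longrightarrow> proj_mat n r $$ (i, j) = (if i = j \<and> i < r then 1 else 0)"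
  by (simp add: proj_mat_def mat_diag_def)

lemma transpose_proj_mat [simp]: "transpose_mat (proj_mat n r) = proj_mat n r"
  by (rule eq_matI) (auto simp: proj_mat_def mat_diag_def)

lemma proj_mat_0 [simp]: "proj_mat n 0 = 0\<^sub>m n n"
  by (rule eq_matI) (auto simp: proj_mat_def mat_diag_def)

lemma proj_mat_self [simp]: "proj_mat n n = 1\<^sub>m n"
  by (rule eq_matI) (auto simp: proj_mat_def mat_diag_def)

lemma proj_mat_idem: "proj_mat n r * proj_mat n r = (proj_mat n r :: 'a::semiring_1 mat)"
  by (simp add: proj_mat_def if_distrib[of "(*) _"] cong: if_cong)

lemma index_mult_proj_mat:
  fixes D :: "'a::semiring_1 mat"
  assumes "D \<in> carrier_mat k n" and "i < k" and "j < n"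
  shows "(D * proj_mat n r) $$ (i, j) = (if j < r then D $$ (i, j) else 0)"
  using assms by (simp add: proj_mat_def mat_diag_mult_right)

lemma index_proj_mat_mult:
  fixes D :: "'a::semiring_1 mat"
  assumes "D \<in> carrier_mat n k" and "i < n" and "j < k"
  shows "(proj_mat n r * D) $$ (i, j) = (if i < r then D $$ (i, j) else 0)"
  using assms by (simp add: proj_mat_def mat_diag_mult_left)

lemma commute_proj_mat_iff:
  fixes D :: "'a::semiring_1 mat"
  assumes "D \<in> carrier_mat n n"
  shows "D * proj_mat n r = proj_mat n r * D \<longleftrightarrow>
         (\<forall>i<n. \<forall>j<n. (i < r) \<noteq> (j < r) \<longrightarrow> D $$ (i, j) = 0)"
proof -
  have "D * proj_mat n r = proj_mat n r * D \<longleftrightarrow>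
        (\<forall>i<n. \<forall>j<n. (D * proj_mat n r) $$ (i, j) = (proj_mat n r * D) $$ (i, j))"
    using assms by (auto simp del: index_mult_mat(1))
  also have "\<dots> \<longleftrightarrow> (\<forall>i<n. \<forall>j<n. (i < r) \<noteq> (j < r) \<longrightarrow> D $$ (i, j) = 0)"
    using assms by (auto simp del: index_mult_mat(1) simp add: index_mult_proj_mat index_proj_mat_mult)
  finally show ?thesis .
qed

lemma block_diag_sizes_Cons_off_block:
  assumes "block_diag_sizes (k # ns) D" and "i < dim_row D" and "j < dim_col D"
    and "(i < k) \<noteq> (j < k)"
  shows "D $$ (i, j) = 0"
proof -
  have "\<not> (blk_start (k # ns) b \<le> i \<and> i < blk_start (k # ns) (Suc b)
          \<and> blk_start (k # ns) b \<le> j \<and> j < blk_start (k # ns) (Suc b))" for b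
    using assms(4) by (cases b) (auto simp: blk_start_def)
  then show ?thesis using assms(1-3) unfolding block_diag_sizes_def by blast
qed

lemma block_diag_sizes_two_blocksI:
  assumes D: "D \<in> carrier_mat (r + s) (r + s)"
    and off: "\<And>i j. i < r + s \<Longrightarrow> j < r + s \<Longrightarrow> (i < r) \<noteq> (j < r) \<Longrightarrow> D $$ (i, j) = 0"
  shows "block_diag_sizes [r, s] D"
  unfolding block_diag_sizes_def
proof (intro allI impI)
  fix i j
  assume ij: "i < dim_row D" "j < dim_col D"
    and not_in_block: "\<not> (\<exists>b < length [r, s]. blk_start [r, s] b \<le> i \<and> i < blk_start [r, s] (Suc b)
                                           \<and> blk_start [r, s] b \<le> j \<and> j < blk_start [r, s] (Suc b))"
  have "blk_start [r, s] 0 = 0" "blk_start [r, s] (Suc 0) = r" "blk_start [r, s] (Suc (Suc 0)) = r + s"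
    by (simp_all add: blk_start_def)
  then have "\<not> (i < r \<and> j < r)" "\<not> (r \<le> i \<and> r \<le> j)"
    using not_in_block[unfolded not_ex] ij D by (auto dest: spec[of _ 0] spec[of _ "Suc 0"])
  then show "D $$ (i, j) = 0" using off ij D by auto
qed

lemma transpose_congruence:
  fixes M :: "'a::comm_semiring_0 mat"
  assumes M: "M \<in> carrier_mat n n" and Q: "Q \<in> carrier_mat n k"
  shows "transpose_mat (transpose_mat Q * M * Q) = transpose_mat Q * transpose_mat M * Q"
proof -
  have "transpose_mat (transpose_mat Q * M * Q) = transpose_mat Q * transpose_mat (transpose_mat Q * M)"
    by (rule transpose_mult) (use M Q in auto)
  also have "transpose_mat (transpose_mat Q * M) = transpose_mat M * Q"
    using transpose_mult[of "transpose_mat Q" k n M n] M Q by simp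
  finally show ?thesis
    using M Q by (simp add: assoc_mult_mat[of _ k n _ n _ k])
qed

lemma invertible_mat_iff_inverse:
  assumes P: "P \<in> carrier_mat n n"
  shows "invertible_mat P \<longleftrightarrow> (\<exists>Q \<in> carrier_mat n n. P * Q = 1\<^sub>m n \<and> Q * P = 1\<^sub>m n)"
proof
  assume "invertible_mat P"
  then obtain Q where PQ: "P * Q = 1\<^sub>m n" and QP: "Q * P = 1\<^sub>m (dim_row Q)"
    using P unfolding invertible_mat_def inverts_mat_def by auto
  have "dim_col Q = n" using PQ by (metis index_mult_mat(3) index_one_mat(3))
  moreover have "dim_row Q = n" using QP P by (metis carrier_matD(2) index_mult_mat(3) index_one_mat(3))
  ultimately show "\<exists>Q \<in> carrier_mat n n. P * Q = 1\<^sub>m n \<and> Q * P = 1\<^sub>m n"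
    using PQ QP by auto
qed (use P in \<open>auto simp: invertible_mat_def inverts_mat_def square_mat.simps\<close>)

lemma (in vec_space) idempotent_eigenbasis:
  assumes X: "X \<in> carrier_mat n n" and XX: "X * X = X"
  obtains B where "B \<subseteq> carrier_vec n" "finite B" "basis B"
    "\<And>b. b \<in> B \<Longrightarrow> X *\<^sub>v b = b \<or> X *\<^sub>v b = 0\<^sub>v n"
proof -
  \<comment> \<open>\<open>X\<close> fixes its own columns and kills those of \<open>1 - X\<close>, and together they span.\<close>
  define S where "S = set (cols X) \<union> (\<lambda>j. unit_vec n j - col X j) ` {..<n}"
  have S: "S \<subseteq> carrier_vec n" "finite S" using X unfolding S_def by (auto simp: cols_def)
  have fixed: "X *\<^sub>v col X j = col X j" if "j < n" for j
    using X that XX col_mult2[OF X X, of j] by simp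
  have eigen: "X *\<^sub>v b = b \<or> X *\<^sub>v b = 0\<^sub>v n" if "b \<in> S" for b
  proof -
    from that consider j where "j < n" "b = col X j" | j where "j < n" "b = unit_vec n j - col X j"
      using X unfolding S_def cols_def by auto
    then show ?thesis
    proof cases
      case 2
      have "X *\<^sub>v b = X *\<^sub>v unit_vec n j - X *\<^sub>v col X j"
        using 2 X by (simp add: mult_minus_distrib_mat_vec)
      also have "X *\<^sub>v unit_vec n j = col X j"
        using col_mult2[OF X one_carrier_mat, of j] X 2 by simp
      finally show ?thesis using X 2 fixed by simp
    qed (use fixed in simp)
  qed
  have "span S = carrier_vec n"
  proof
    show "span S \<subseteq> carrier_vec n" using S span_closed by auto
    have "unit_vec n j \<in> span S" if "j < n" for j
    proof -
      have "col X j \<in> span S" "unit_vec n j - col X j \<in> span S"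
        using that X S unfolding S_def by (auto intro: in_own_span[THEN subsetD] simp: cols_def)
      then have "col X j + (unit_vec n j - col X j) \<in> span S" using span_add1 S by simp
      moreover have "col X j + (unit_vec n j - col X j) = unit_vec n j" using that X by auto
      ultimately show ?thesis by simp
    qed
    then have "set (unit_vecs n) \<subseteq> span S" by (auto simp: unit_vecs_def)
    then have "span (set (unit_vecs n)) \<subseteq> span S" using span_subsetI[OF S(1)] by blast
    then show "carrier_vec n \<subseteq> span S" using span_unit_vecs_is_carrier by simp
  qed
  then obtain B where "B \<subseteq> S" "minimal B (\<lambda>T. T \<subseteq> carrier_vec n \<and> span T = carrier_vec n)"
    using minimal_exists[OF S(2), of "\<lambda>T. T \<subseteq> carrier_vec n \<and> span T = carrier_vec n"] S by auto
  with min_gen_is_basis S eigen show ?thesis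
    by (intro that[of B]) (auto intro: finite_subset)
qed

lemma idempotent_mat_similar_proj_mat:
  fixes X :: "'a::field mat"
  assumes X: "X \<in> carrier_mat n n" and XX: "X * X = X"
  obtains P Q r where "P \<in> carrier_mat n n" "Q \<in> carrier_mat n n" "P * Q = 1\<^sub>m n" "Q * P = 1\<^sub>m n"
    "r \<le> n" "X * P = P * proj_mat n r"
proof -
  interpret vec_space "TYPE('a)" n .
  obtain B where B: "B \<subseteq> carrier_vec n" "finite B" "basis B"
    and eigen: "\<And>b. b \<in> B \<Longrightarrow> X *\<^sub>v b = b \<or> X *\<^sub>v b = 0\<^sub>v n"
    using idempotent_eigenbasis[OF X XX] by blast
  obtain L1 where L1: "set L1 = {b \<in> B. X *\<^sub>v b = b}" "distinct L1"
    using finite_distinct_list[of "{b \<in> B. X *\<^sub>v b = b}"] B(2) by auto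
  obtain L2 where L2: "set L2 = {b \<in> B. X *\<^sub>v b \<noteq> b}" "distinct L2"
    using finite_distinct_list[of "{b \<in> B. X *\<^sub>v b \<noteq> b}"] B(2) by auto
  define L where "L = L1 @ L2"
  define P where "P = mat_of_cols n L"
  have setL: "set L = B" and distL: "distinct L" using L1 L2 unfolding L_def by auto
  have lenL: "length L = n"
    using distinct_card[OF distL] setL dim_basis[OF B(2,3)] dim_is_n by simp
  have P: "P \<in> carrier_mat n n" and colsP: "cols P = L"
    using lenL setL B(1) unfolding P_def by auto
  have "rank P = n"
    using lin_indpt_full_rank[OF P] colsP distL setL B(3) unfolding basis_def by simp
  then have "det P \<noteq> 0" using det_rank_iff[OF P] by simp
  then obtain Q where Q: "Q \<in> carrier_mat n n" "P * Q = 1\<^sub>m n" "Q * P = 1\<^sub>m n"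
    using det_non_zero_imp_unit[OF P, of "()"] unfolding Units_def ring_mat_simps by auto
  have "X * P = P * proj_mat n (length L1)"
  proof (rule mat_col_eqI)
    fix j assume "j < dim_col (P * proj_mat n (length L1))"
    then have j: "j < n" by simp
    have colPj: "col P j = L ! j" using j colsP P by (metis cols_length cols_nth carrier_matD(2))
    have "col (P * proj_mat n (length L1)) j = (if j < length L1 then col P j else 0\<^sub>v n)"
      using P j by (auto simp: index_mult_proj_mat simp del: index_mult_mat(1))
    also have "\<dots> = X *\<^sub>v col P j"
    proof (cases "j < length L1")
      case True
      then have "L ! j \<in> set L1" unfolding L_def by (simp add: nth_append)
      then show ?thesis using True L1(1) colPj by simp
    next
      case False
      then have "L ! j \<in> set L2" using j lenL unfolding L_def by (simp add: nth_append)
      then show ?thesis using False L2(1) eigen colPj by force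
    qed
    finally show "col (X * P) j = col (P * proj_mat n (length L1)) j"
      using col_mult2[OF X P j] by simp
  qed (use X P in auto)
  moreover have "length L1 \<le> n" using lenL unfolding L_def by simp
  ultimately show ?thesis using that P Q by blast
qed

lemma center_idempotent_of_block_diag:
  fixes A :: "nat \<Rightarrow> 'a::field mat"
  assumes sym: "\<forall>i \<in> {1..m}. sym_mat n (A i)"
    and P: "P \<in> carrier_mat n n" "invertible_mat P"
    and k: "0 < k" "k < n"
    and blocks: "\<forall>i \<in> {1..m}. block_diag_sizes (k # ns) (transpose_mat P * A i * P)"
  shows "\<exists>X \<in> center n m A. X * X = X \<and> X \<noteq> 0\<^sub>m n n \<and> X \<noteq> 1\<^sub>m n"
proof -
  obtain Q where Q: "Q \<in> carrier_mat n n" "P * Q = 1\<^sub>m n" "Q * P = 1\<^sub>m n"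
    using P invertible_mat_iff_inverse by blast
  define E :: "'a mat" where "E = proj_mat n k"
  define X where "X = P * E * Q"
  have E: "E \<in> carrier_mat n n" unfolding E_def by simp
  have X: "X \<in> carrier_mat n n" using P Q E unfolding X_def by simp
  have cancel: "Q * (P * Z) = Z" if "Z \<in> carrier_mat n n" for Z
    using that P Q by (simp flip: assoc_mult_mat[of Q n n P n Z n])
  have "E * E * Q = E * Q" unfolding E_def by (simp add: proj_mat_idem)
  then have XX: "X * X = X"
    using P Q E cancel unfolding X_def by (simp add: assoc_mult_mat[of _ n n _ n _ n])
  have QXP: "Q * X * P = E"
    using P Q E cancel unfolding X_def by (simp add: assoc_mult_mat[of _ n n _ n _ n])
  have "X \<noteq> 0\<^sub>m n n"
  proof
    assume "X = 0\<^sub>m n n"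
    then have "E = 0\<^sub>m n n" using QXP P Q by simp
    moreover have "E $$ (0, 0) = 1" using k by (simp add: E_def)
    ultimately show False using k by simp
  qed
  moreover have "X \<noteq> 1\<^sub>m n"
  proof
    assume "X = 1\<^sub>m n"
    then have "E = 1\<^sub>m n" using QXP P Q by simp
    moreover have "E $$ (k, k) = 0" using k by (simp add: E_def)
    ultimately show False using k by simp
  qed
  moreover have "X \<in> center n m A"
    unfolding center_def
  proof (intro CollectI conjI ballI X)
    fix i assume i: "i \<in> {1..m}"
    have Ai: "A i \<in> carrier_mat n n" "transpose_mat (A i) = A i"
      using sym i unfolding sym_mat_def by auto
    define D where "D = transpose_mat P * A i * P"
    have D: "D \<in> carrier_mat n n" using P Ai unfolding D_def by simp
    have "transpose_mat D = D" using transpose_congruence[OF Ai(1) P(1)] Ai unfolding D_def by simp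
    moreover have "D * E = E * D"
      unfolding E_def commute_proj_mat_iff[OF D]
      using block_diag_sizes_Cons_off_block blocks i D unfolding D_def by fastforce
    ultimately have DE_sym: "transpose_mat (D * E) = D * E"
      using transpose_mult[OF D E] by (simp add: E_def)
    have "transpose_mat Q * transpose_mat P = 1\<^sub>m n"
      using transpose_mult[OF P(1) Q(1)] Q by simp
    then have cancel_transpose: "transpose_mat Q * (transpose_mat P * Z) = Z" if "Z \<in> carrier_mat n n" for Z
      using that P Q by (simp flip: assoc_mult_mat[of "transpose_mat Q" n n "transpose_mat P" n Z n])
    have "A i * X = transpose_mat Q * (D * E) * Q"
      using P Q E Ai cancel_transpose unfolding X_def D_def by (simp add: assoc_mult_mat[of _ n n _ n _ n])
    then show "transpose_mat (A i * X) = A i * X"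
      using transpose_congruence[of "D * E" n Q n] D E Q DE_sym by simp
  qed
  ultimately show ?thesis using XX by blast
qed

lemma block_diag_of_center_idempotent:
  fixes A :: "nat \<Rightarrow> 'a::field mat"
  assumes sym: "\<forall>i \<in> {1..m}. sym_mat n (A i)"
    and X: "X \<in> center n m A" "X * X = X" "X \<noteq> 0\<^sub>m n n" "X \<noteq> 1\<^sub>m n"
  obtains P r where "P \<in> carrier_mat n n" "invertible_mat P" "0 < r" "r < n"
    "\<forall>i \<in> {1..m}. block_diag_sizes [r, n - r] (transpose_mat P * A i * P)"
proof -
  have Xc: "X \<in> carrier_mat n n" using X(1) unfolding center_def by auto
  obtain P Q r where P: "P \<in> carrier_mat n n" and Q: "Q \<in> carrier_mat n n"
    and PQ: "P * Q = 1\<^sub>m n" and QP: "Q * P = 1\<^sub>m n"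
    and r: "r \<le> n" and XP: "X * P = P * proj_mat n r"
    using idempotent_mat_similar_proj_mat[OF Xc X(2)] by blast
  have "X = X * P * Q" using Xc P Q PQ by (simp add: assoc_mult_mat[of X n n P n Q n])
  then have X_eq: "X = P * proj_mat n r * Q" using XP by simp
  have "r \<noteq> 0" using X_eq X(3) P Q by auto
  moreover have "r \<noteq> n" using X_eq X(4) P PQ by auto
  moreover have "block_diag_sizes [r, n - r] (transpose_mat P * A i * P)" if i: "i \<in> {1..m}" for i
  proof -
    have Ai: "A i \<in> carrier_mat n n" "transpose_mat (A i) = A i"
      using sym i unfolding sym_mat_def by auto
    define D where "D = transpose_mat P * A i * P"
    have D: "D \<in> carrier_mat n n" using P Ai unfolding D_def by simp
    have D_sym: "transpose_mat D = D"
      using transpose_congruence[OF Ai(1) P] Ai unfolding D_def by simp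
    have "D * proj_mat n r = transpose_mat P * (A i * X) * P"
      using P Ai Xc XP unfolding D_def by (simp add: assoc_mult_mat[of _ n n _ n _ n])
    moreover have "transpose_mat (A i * X) = A i * X" using X(1) i unfolding center_def by auto
    ultimately have "transpose_mat (D * proj_mat n r) = D * proj_mat n r"
      using transpose_congruence[of "A i * X" n P n] Ai Xc P by simp
    then have "D * proj_mat n r = proj_mat n r * D"
      using transpose_mult[OF D proj_mat_carrier] D_sym by simp
    then have "\<forall>a<n. \<forall>b<n. (a < r) \<noteq> (b < r) \<longrightarrow> D $$ (a, b) = 0"
      using commute_proj_mat_iff[OF D] by simp
    then show ?thesis
      using block_diag_sizes_two_blocksI[of D r "n - r"] D r unfolding D_def by simp
  qed
  moreover have "invertible_mat P" using invertible_mat_iff_inverse[OF P] Q PQ QP by blast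
  ultimately show ?thesis using that[OF P] r by simp
qed

theorem mainTheorem2:
  fixes A :: "nat \<Rightarrow> 'a::field mat" and n m :: nat
  assumes char: "(2::'a) \<noteq> 0"
    and sym: "\<forall>i \<in> {1..m}. sym_mat n (A i)"
  shows "(\<not> (\<exists>P ns. P \<in> carrier_mat n n \<and> invertible_mat P \<and>
               length ns \<ge> 2 \<and> (\<forall>k \<in> set ns. k > 0) \<and> sum_list ns = n \<and>
               (\<forall>i \<in> {1..m}. block_diag_sizes ns (transpose_mat P * A i * P))))
     \<longleftrightarrow> (\<forall>X \<in> center n m A. X * X = X \<longrightarrow> X = 0\<^sub>m n n \<or> X = 1\<^sub>m n)"
proof
  assume no_split: "\<not> (\<exists>P ns. P \<in> carrier_mat n n \<and> invertible_mat P \<and>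
               length ns \<ge> 2 \<and> (\<forall>k \<in> set ns. k > 0) \<and> sum_list ns = n \<and>
               (\<forall>i \<in> {1..m}. block_diag_sizes ns (transpose_mat P * A i * P)))"
  show "\<forall>X \<in> center n m A. X * X = X \<longrightarrow> X = 0\<^sub>m n n \<or> X = 1\<^sub>m n"
  proof (intro ballI impI, rule ccontr)
    fix X assume "X \<in> center n m A" "X * X = X" "\<not> (X = 0\<^sub>m n n \<or> X = 1\<^sub>m n)"
    then obtain P r where "P \<in> carrier_mat n n" "invertible_mat P" "0 < r" "r < n"
      "\<forall>i \<in> {1..m}. block_diag_sizes [r, n - r] (transpose_mat P * A i * P)"
      using block_diag_of_center_idempotent[OF sym] by blast
    then show False using no_split[unfolded not_ex, rule_format, of P "[r, n - r]"] by auto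
  qed
next
  assume trivial: "\<forall>X \<in> center n m A. X * X = X \<longrightarrow> X = 0\<^sub>m n n \<or> X = 1\<^sub>m n"
  show "\<not> (\<exists>P ns. P \<in> carrier_mat n n \<and> invertible_mat P \<and>
               length ns \<ge> 2 \<and> (\<forall>k \<in> set ns. k > 0) \<and> sum_list ns = n \<and>
               (\<forall>i \<in> {1..m}. block_diag_sizes ns (transpose_mat P * A i * P)))"
  proof (intro notI, elim exE conjE)
    fix P ns
    assume P: "P \<in> carrier_mat n n" "invertible_mat P"
      and ns: "length ns \<ge> 2" "\<forall>k \<in> set ns. k > 0" "sum_list ns = n"
      and blocks: "\<forall>i \<in> {1..m}. block_diag_sizes ns (transpose_mat P * A i * P)"
    from ns(1) obtain k l ns' where "ns = k # l # ns'"
      by (auto simp: numeral_2_eq_2 Suc_le_length_iff)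
    then show False
      using center_idempotent_of_block_diag[OF sym P, of k "l # ns'"] ns blocks trivial by auto
  qed
qed

end
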